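(* Let $q_0,\dots,q_{T-1}\in\mathcal S^{d-1}$ be a fixed sequence of recommendations spanning $\mathbb{R}^d$, and let step sizes be either constant $\eta_t=\eta$ or decreasing $\eta_t=\frac{\eta}{t+s}$. Define $\Phi_0=I$, $\Phi_{t+1}=(I+\eta_tq_tq_t^\top)\Phi_t$, and $F_T:\mathcal S^{d-1}\to\mathbb{R}^T$ by \[F_T(p_0)=\left(\frac{q_0^\top\Phi_0p_0}{\|\Phi_0p_0\|},\dots,\frac{q_{T-1}^\top\Phi_{T-1}p_0}{\|\Phi_{T-1}p_0\|}\right),\] which is the sequence of affinities $y_t=q_t^\top p_t$ generated by the dynamics $\tilde p_{t+1}=p_t+\eta_t(p_t^\top q_t)q_t$, $p_{t+1}=\tilde p_{t+1}/\|\tilde p_{t+1}\|_2$ from initial preference $p_0$. Then $F_T$ is locally invertible around every $p_0\in\mathcal S^{d-1}$: its differential at $p_0$, as a linear map from the tangent space of $\mathcal S^{d-1}$ at $p_0$ to $\mathbb{R}^T$, is injective.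
   Context: $\mathcal S^{d-1}$ is the unit sphere in $\mathbb{R}^d$, viewed as a smooth manifold. In the constant step-size setting $\eta>0$; in the decreasing setting $\eta,s$ are positive integers. *)

theory Defs
  imports "HOL-Analysis.Analysis"
begin

definition outer :: "real^'d \<Rightarrow> real^'d^'d" where
  "outer q = (\<chi> i j. q $ i * q $ j)"

fun Phi :: "(nat \<Rightarrow> real^'d) \<Rightarrow> (nat \<Rightarrow> real) \<Rightarrow> nat \<Rightarrow> real^'d^'d" where
  "Phi q eta 0 = mat 1"
| "Phi q eta (Suc t) = (mat 1 + eta t *\<^sub>R outer (q t)) ** Phi q eta t"

text \<open>t-th component of F_T: p \<mapsto> q_t^T Phi_t p / |Phi_t p| (defined on R^d minus 0;
  its restriction to the sphere is the map F_T of the paper).\<close>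
definition Fcomp :: "(nat \<Rightarrow> real^'d) \<Rightarrow> (nat \<Rightarrow> real) \<Rightarrow> nat \<Rightarrow> real^'d \<Rightarrow> real" where
  "Fcomp q eta t p = (q t \<bullet> (Phi q eta t *v p)) / norm (Phi q eta t *v p)"

definition admissible_steps :: "(nat \<Rightarrow> real) \<Rightarrow> bool" where
  "admissible_steps eta \<longleftrightarrow>
     (\<exists>c::real. c > 0 \<and> (\<forall>t. eta t = c)) \<or>
     (\<exists>a s::nat. a > 0 \<and> s > 0 \<and> (\<forall>t. eta t = real a / (real t + real s)))"

end

theory Submission
  imports Defs
begin

text \<open>Each component of F_T is p \<mapsto> q_t \<bullet> sgn (Phi_t p), and the derivative of sgn at y
  is the orthogonal projection onto the complement of y, scaled by 1 / |y|. Let v \<bottom> p_0 lie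
  in the kernel of every component. Inductively, v \<bottom> q_s for all s < t; then Phi_t, a product of maps
  I + eta_s q_s q_s^T, fixes v and preserves inner products with v, so Phi_t p_0 \<bottom> v and
  the t-th component of the derivative at v is q_t \<bullet> v / |Phi_t p_0|. Hence v \<bottom> q_t, and
  finally v is orthogonal to the spanning set {q_t}, i.e. v = 0. Nonnegative steps make
  every Phi_t norm-nondecreasing, so Phi_t p_0 never vanishes.\<close>

lemma outer_step_mult_vec:
  "(mat 1 + e *\<^sub>R outer q) *v y = y + (e * (q \<bullet> y)) *\<^sub>R (q::real^'d)"
proof -
  have "(e *\<^sub>R outer q) *v y = (e * (q \<bullet> y)) *\<^sub>R q"
    by (simp add: vec_eq_iff matrix_vector_mult_def outer_def inner_vec_def
        sum_distrib_left sum_distrib_right mult_ac)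
  then show ?thesis by (simp add: matrix_vector_mult_add_rdistrib)
qed

lemma Phi_Suc_mult_vec:
  "Phi q eta (Suc t) *v x = Phi q eta t *v x + (eta t * (q t \<bullet> (Phi q eta t *v x))) *\<^sub>R q t"
  unfolding Phi.simps matrix_vector_mul_assoc[symmetric] outer_step_mult_vec ..

lemma norm_le_norm_outer_step:
  fixes q y :: "'a::real_inner"
  assumes "e \<ge> 0"
  shows "norm y \<le> norm (y + (e * (q \<bullet> y)) *\<^sub>R q)"
proof -
  have "(y + (e * (q \<bullet> y)) *\<^sub>R q) \<bullet> (y + (e * (q \<bullet> y)) *\<^sub>R q)
      = y \<bullet> y + (2 * e + e\<^sup>2 * (q \<bullet> q)) * (q \<bullet> y)\<^sup>2"
    by (simp add: inner_add_left inner_add_right inner_commute algebra_simps power2_eq_square)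
  also have "\<dots> \<ge> y \<bullet> y"
    using assms by (intro add_increasing2) auto
  finally show ?thesis by (simp add: norm_eq_sqrt_inner)
qed

lemma norm_le_norm_Phi_mult_vec:
  assumes "\<forall>t. eta t \<ge> 0"
  shows "norm x \<le> norm (Phi q eta t *v x)"
proof (induction t)
  case 0
  then show ?case by simp
next
  case (Suc t)
  have "norm (Phi q eta t *v x) \<le> norm (Phi q eta (Suc t) *v x)"
    unfolding Phi_Suc_mult_vec using assms by (intro norm_le_norm_outer_step) simp
  with Suc.IH show ?case by linarith
qed

lemma Phi_mult_vec_nonzero:
  assumes "\<forall>t. eta t \<ge> 0" and "x \<noteq> 0"
  shows "Phi q eta t *v x \<noteq> 0"
  using norm_le_norm_Phi_mult_vec[OF assms(1), of x q t] assms(2) by auto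

lemma Phi_mult_vec_fixes_orthogonal:
  assumes "\<forall>s<t. q s \<bullet> v = 0"
  shows "Phi q eta t *v v = v"
  using assms by (induction t) (simp_all add: Phi_Suc_mult_vec del: Phi.simps(2))

lemma inner_Phi_mult_vec_orthogonal:
  assumes "\<forall>s<t. q s \<bullet> v = 0"
  shows "(Phi q eta t *v x) \<bullet> v = x \<bullet> v"
  using assms by (induction t) (simp_all add: Phi_Suc_mult_vec inner_add_left del: Phi.simps(2))

definition sgn_derivative :: "'a::real_inner \<Rightarrow> 'a \<Rightarrow> 'a" where
  "sgn_derivative y w = (w - (w \<bullet> sgn y) *\<^sub>R sgn y) /\<^sub>R norm y"

lemma has_derivative_sgn:
  fixes y :: "'a::real_inner"
  assumes "y \<noteq> 0"
  shows "(sgn has_derivative sgn_derivative y) (at y)"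
proof -
  have "((\<lambda>x. inverse (norm x)) has_derivative
          (\<lambda>w. - (inverse (norm y) * (w \<bullet> sgn y) * inverse (norm y)))) (at y)"
    using Deriv.has_derivative_inverse[OF _ has_derivative_norm[OF assms]] assms by simp
  then have "((\<lambda>x. inverse (norm x) *\<^sub>R x) has_derivative
      (\<lambda>w. inverse (norm y) *\<^sub>R w + (- (inverse (norm y) * (w \<bullet> sgn y) * inverse (norm y))) *\<^sub>R y))
      (at y)"
    by (rule has_derivative_scaleR[OF _ has_derivative_ident])
  moreover have "inverse (norm y) *\<^sub>R w + (- (inverse (norm y) * (w \<bullet> sgn y) * inverse (norm y))) *\<^sub>R y
      = sgn_derivative y w" for w
    using assms by (simp add: sgn_derivative_def sgn_div_norm algebra_simps divide_inverse)
  moreover have "sgn = (\<lambda>x::'a. inverse (norm x) *\<^sub>R x)"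
    by (simp add: fun_eq_iff sgn_div_norm)
  ultimately show ?thesis by simp
qed

lemma sgn_derivative_orthogonal:
  assumes "w \<bullet> y = 0"
  shows "sgn_derivative y w = w /\<^sub>R norm y"
  using assms by (simp add: sgn_derivative_def sgn_div_norm)

lemma Fcomp_eq_inner_sgn: "Fcomp q eta t = (\<lambda>p. q t \<bullet> sgn (Phi q eta t *v p))"
  by (simp add: fun_eq_iff Fcomp_def sgn_div_norm divide_inverse_commute)

lemma has_derivative_Fcomp:
  assumes "Phi q eta t *v p \<noteq> 0"
  shows "(Fcomp q eta t has_derivative
           (\<lambda>h. q t \<bullet> sgn_derivative (Phi q eta t *v p) (Phi q eta t *v h))) (at p)"
proof -
  have "((\<lambda>p. sgn (Phi q eta t *v p)) has_derivative
          (\<lambda>h. sgn_derivative (Phi q eta t *v p) (Phi q eta t *v h))) (at p)"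
    using has_derivative_compose[OF bounded_linear_imp_has_derivative[OF matrix_vector_mul_bounded_linear]
          has_derivative_sgn[OF assms]]
    by simp
  then show ?thesis
    unfolding Fcomp_eq_inner_sgn by (rule bounded_linear.has_derivative[OF bounded_linear_inner_right])
qed

lemma orthogonal_recommendations_if_Fcomp_derivatives_vanish:
  assumes nonneg: "\<forall>t. eta t \<ge> 0" and "p \<noteq> 0" and "v \<bullet> p = 0"
    and vanish: "\<forall>t<T. q t \<bullet> sgn_derivative (Phi q eta t *v p) (Phi q eta t *v v) = 0"
  shows "\<forall>t<T. q t \<bullet> v = 0"
  using vanish
proof (induction T)
  case 0
  then show ?case by simp
next
  case (Suc T)
  then have orth: "\<forall>s<T. q s \<bullet> v = 0" by simp
  have "Phi q eta T *v p \<noteq> 0"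
    using Phi_mult_vec_nonzero[OF nonneg \<open>p \<noteq> 0\<close>] .
  moreover have "Phi q eta T *v v = v"
    using Phi_mult_vec_fixes_orthogonal[OF orth] .
  moreover have "v \<bullet> (Phi q eta T *v p) = 0"
    using inner_Phi_mult_vec_orthogonal[OF orth] \<open>v \<bullet> p = 0\<close> by (simp add: inner_commute)
  moreover have "q T \<bullet> sgn_derivative (Phi q eta T *v p) (Phi q eta T *v v) = 0"
    using Suc.prems by simp
  ultimately have "q T \<bullet> v = 0"
    by (simp add: sgn_derivative_orthogonal)
  with orth show ?case using less_Suc_eq by auto
qed

lemma orthogonal_spanning_set_eq_0:
  assumes "span S = UNIV" and "\<forall>x\<in>S. x \<bullet> v = 0"
  shows "v = 0"
  using orthogonal_to_span[of v S v] assms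
  by (simp add: orthogonal_def inner_commute)

lemma admissible_steps_nonneg: "admissible_steps eta \<Longrightarrow> eta t \<ge> 0"
  unfolding admissible_steps_def by auto

theorem proposition7:
  fixes q :: "nat \<Rightarrow> real^'d" and eta :: "nat \<Rightarrow> real" and T :: nat and p0 :: "real^'d"
  assumes unit: "\<forall>t<T. norm (q t) = 1"
    and spans: "span (q ` {..<T}) = UNIV"
    and steps: "admissible_steps eta"
    and p0: "norm p0 = 1"
  shows "\<exists>D :: nat \<Rightarrow> real^'d \<Rightarrow> real.
           (\<forall>t<T. (Fcomp q eta t has_derivative D t) (at p0)) \<and>
           (\<forall>v. v \<bullet> p0 = 0 \<and> (\<forall>t<T. D t v = 0) \<longrightarrow> v = 0)"
proof -
  have nonneg: "\<forall>t. eta t \<ge> 0"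
    using steps admissible_steps_nonneg by blast
  have "p0 \<noteq> 0" using p0 by auto
  define D where "D t h = q t \<bullet> sgn_derivative (Phi q eta t *v p0) (Phi q eta t *v h)" for t h
  have "(Fcomp q eta t has_derivative D t) (at p0)" for t
    unfolding D_def by (rule has_derivative_Fcomp[OF Phi_mult_vec_nonzero[OF nonneg \<open>p0 \<noteq> 0\<close>]])
  moreover have "v = 0" if "v \<bullet> p0 = 0" and "\<forall>t<T. D t v = 0" for v
    using orthogonal_recommendations_if_Fcomp_derivatives_vanish[OF nonneg \<open>p0 \<noteq> 0\<close>, of v T q]
      orthogonal_spanning_set_eq_0[OF spans, of v] that
    by (auto simp: D_def)
  ultimately show ?thesis by blast
qed

end
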